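(* Let $M$ be an extremally $\aleph_0$-saturated model of a complete affine theory $T$ and let $P,Q:M^n\to[0,\infty)$ be definable predicates. Then $Z(P)\subseteq Z(Q)$ if and only if for every $\epsilon>0$ there is $\lambda\ge0$ such that $Q(\bar x)\le\lambda P(\bar x)+\epsilon$ for all $\bar x\in M^n$.
   Context: Affine continuous logic: $L$-structures are complete metric spaces $(M,d)$ with $d\le1$ and Lipschitz interpretations of function symbols and $[0,1]$-valued relation symbols. Affine formulas are built from $1$ and atomic formulas (including $d$) using only $r\cdot\phi$ ($r\in\mathbb R$), $\phi+\psi$, $\inf_x$, $\sup_x$. For $A\subseteq M$, an $n$-type over $A$ is a maximal set of conditions with parameters from $A$ satisfiable with the theory of $(M,a)_{a\in A}$, identified with a positive normalized linear functional on formulas; a type is extreme if it is an extreme point of the convex set $S_n(A)$. $M$ is extremally $\aleph_0$-saturated if for every finite $A\subseteq M$ every extreme type in $S_n(A)$ is realized in $M$. A predicate $P:M^n\to\mathbb R$ is definable (without parameters) if it is a uniform limit of $\phi_k^M$ for affine formulas $\phi_k$. $Z(P)=\{\bar a\in M^n:P(\bar a)=0\}$. *)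

theory Defs
  imports "HOL-Analysis.Analysis"
begin

record ('f, 'r) lang =
  farity :: "'f \<Rightarrow> nat"
  rarity :: "'r \<Rightarrow> nat"

datatype ('a, 'f) trm = Var nat | Par 'a | Fn 'f "('a, 'f) trm list"

datatype ('a, 'f, 'r) fm =
    FOne
  | Atom 'r "('a, 'f) trm list"
  | Dist "('a, 'f) trm" "('a, 'f) trm"
  | Scale real "('a, 'f, 'r) fm"
  | Plus "('a, 'f, 'r) fm" "('a, 'f, 'r) fm"
  | FInf nat "('a, 'f, 'r) fm"
  | FSup nat "('a, 'f, 'r) fm"

fun wf_trm :: "('f, 'r) lang \<Rightarrow> ('a, 'f) trm \<Rightarrow> bool" where
  "wf_trm L (Var i) = True"
| "wf_trm L (Par a) = True"
| "wf_trm L (Fn f ts) = (length ts = farity L f \<and> (\<forall>t\<in>set ts. wf_trm L t))"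

fun fv_trm :: "('a, 'f) trm \<Rightarrow> nat set" where
  "fv_trm (Var i) = {i}"
| "fv_trm (Par a) = {}"
| "fv_trm (Fn f ts) = (\<Union>t\<in>set ts. fv_trm t)"

fun params_trm :: "('a, 'f) trm \<Rightarrow> 'a set" where
  "params_trm (Var i) = {}"
| "params_trm (Par a) = {a}"
| "params_trm (Fn f ts) = (\<Union>t\<in>set ts. params_trm t)"

fun wf_fm :: "('f, 'r) lang \<Rightarrow> ('a, 'f, 'r) fm \<Rightarrow> bool" where
  "wf_fm L FOne = True"
| "wf_fm L (Atom r ts) = (length ts = rarity L r \<and> (\<forall>t\<in>set ts. wf_trm L t))"
| "wf_fm L (Dist t u) = (wf_trm L t \<and> wf_trm L u)"
| "wf_fm L (Scale c \<phi>) = wf_fm L \<phi>"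
| "wf_fm L (Plus \<phi> \<psi>) = (wf_fm L \<phi> \<and> wf_fm L \<psi>)"
| "wf_fm L (FInf x \<phi>) = wf_fm L \<phi>"
| "wf_fm L (FSup x \<phi>) = wf_fm L \<phi>"

fun fv_fm :: "('a, 'f, 'r) fm \<Rightarrow> nat set" where
  "fv_fm FOne = {}"
| "fv_fm (Atom r ts) = (\<Union>t\<in>set ts. fv_trm t)"
| "fv_fm (Dist t u) = fv_trm t \<union> fv_trm u"
| "fv_fm (Scale c \<phi>) = fv_fm \<phi>"
| "fv_fm (Plus \<phi> \<psi>) = fv_fm \<phi> \<union> fv_fm \<psi>"
| "fv_fm (FInf x \<phi>) = fv_fm \<phi> - {x}"
| "fv_fm (FSup x \<phi>) = fv_fm \<phi> - {x}"

fun params_fm :: "('a, 'f, 'r) fm \<Rightarrow> 'a set" where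
  "params_fm FOne = {}"
| "params_fm (Atom r ts) = (\<Union>t\<in>set ts. params_trm t)"
| "params_fm (Dist t u) = params_trm t \<union> params_trm u"
| "params_fm (Scale c \<phi>) = params_fm \<phi>"
| "params_fm (Plus \<phi> \<psi>) = params_fm \<phi> \<union> params_fm \<psi>"
| "params_fm (FInf x \<phi>) = params_fm \<phi>"
| "params_fm (FSup x \<phi>) = params_fm \<phi>"

record ('a, 'f, 'r) struct =
  carrier :: "'a set"
  mdist :: "'a \<Rightarrow> 'a \<Rightarrow> real"
  fun_int :: "'f \<Rightarrow> 'a list \<Rightarrow> 'a"
  rel_int :: "'r \<Rightarrow> 'a list \<Rightarrow> real"

definition tuples :: "('a, 'f, 'r) struct \<Rightarrow> nat \<Rightarrow> 'a list set" where
  "tuples M n = {xs. length xs = n \<and> set xs \<subseteq> carrier M}"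

definition sum_dist :: "('a, 'f, 'r) struct \<Rightarrow> 'a list \<Rightarrow> 'a list \<Rightarrow> real" where
  "sum_dist M xs ys = sum_list (map2 (mdist M) xs ys)"

definition is_structure :: "('f, 'r) lang \<Rightarrow> ('a, 'f, 'r) struct \<Rightarrow> bool" where
  "is_structure L M \<longleftrightarrow>
     carrier M \<noteq> {} \<and>
     (\<forall>x\<in>carrier M. \<forall>y\<in>carrier M.
        0 \<le> mdist M x y \<and> mdist M x y \<le> 1 \<and>
        (mdist M x y = 0 \<longleftrightarrow> x = y) \<and> mdist M x y = mdist M y x \<and>
        (\<forall>z\<in>carrier M. mdist M x z \<le> mdist M x y + mdist M y z)) \<and>
     (\<forall>s::nat \<Rightarrow> 'a. (\<forall>k. s k \<in> carrier M) \<longrightarrow>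
        (\<forall>e>0. \<exists>N. \<forall>m\<ge>N. \<forall>k\<ge>N. mdist M (s m) (s k) < e) \<longrightarrow>
        (\<exists>l\<in>carrier M. \<forall>e>0. \<exists>N. \<forall>m\<ge>N. mdist M (s m) l < e)) \<and>
     (\<forall>f. (\<forall>xs\<in>tuples M (farity L f). fun_int M f xs \<in> carrier M) \<and>
          (\<exists>C. \<forall>xs\<in>tuples M (farity L f). \<forall>ys\<in>tuples M (farity L f).
              mdist M (fun_int M f xs) (fun_int M f ys) \<le> C * sum_dist M xs ys)) \<and>
     (\<forall>r. (\<forall>xs\<in>tuples M (rarity L r). 0 \<le> rel_int M r xs \<and> rel_int M r xs \<le> 1) \<and>
          (\<exists>C. \<forall>xs\<in>tuples M (rarity L r). \<forall>ys\<in>tuples M (rarity L r).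
              \<bar>rel_int M r xs - rel_int M r ys\<bar> \<le> C * sum_dist M xs ys))"

fun eval_trm :: "('a, 'f, 'r) struct \<Rightarrow> (nat \<Rightarrow> 'a) \<Rightarrow> ('a, 'f) trm \<Rightarrow> 'a" where
  "eval_trm M \<rho> (Var i) = \<rho> i"
| "eval_trm M \<rho> (Par a) = a"
| "eval_trm M \<rho> (Fn f ts) = fun_int M f (map (eval_trm M \<rho>) ts)"

fun eval_fm :: "('a, 'f, 'r) struct \<Rightarrow> (nat \<Rightarrow> 'a) \<Rightarrow> ('a, 'f, 'r) fm \<Rightarrow> real" where
  "eval_fm M \<rho> FOne = 1"
| "eval_fm M \<rho> (Atom r ts) = rel_int M r (map (eval_trm M \<rho>) ts)"
| "eval_fm M \<rho> (Dist t u) = mdist M (eval_trm M \<rho> t) (eval_trm M \<rho> u)"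
| "eval_fm M \<rho> (Scale c \<phi>) = c * eval_fm M \<rho> \<phi>"
| "eval_fm M \<rho> (Plus \<phi> \<psi>) = eval_fm M \<rho> \<phi> + eval_fm M \<rho> \<psi>"
| "eval_fm M \<rho> (FInf x \<phi>) = (INF a\<in>carrier M. eval_fm M (\<rho>(x := a)) \<phi>)"
| "eval_fm M \<rho> (FSup x \<phi>) = (SUP a\<in>carrier M. eval_fm M (\<rho>(x := a)) \<phi>)"

definition tuple_val :: "('a, 'f, 'r) struct \<Rightarrow> 'a list \<Rightarrow> nat \<Rightarrow> 'a" where
  "tuple_val M xs i = (if i < length xs then xs ! i else (SOME a. a \<in> carrier M))"

definition eval_at :: "('a, 'f, 'r) struct \<Rightarrow> ('a, 'f, 'r) fm \<Rightarrow> 'a list \<Rightarrow> real" where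
  "eval_at M \<phi> xs = eval_fm M (tuple_val M xs) \<phi>"

definition fms :: "('f, 'r) lang \<Rightarrow> nat \<Rightarrow> 'a set \<Rightarrow> ('a, 'f, 'r) fm set" where
  "fms L n A = {\<phi>. wf_fm L \<phi> \<and> fv_fm \<phi> \<subseteq> {..<n} \<and> params_fm \<phi> \<subseteq> A}"

text \<open>S_n(A): n-types over A, identified with positive normalized linear
  functionals on formulas (functionals vanish outside the formulas over A,
  so that convex combinations are computed pointwise).  Positivity is with
  respect to the theory of (M,a)_(a in A): T_A entails phi >= 0 iff
  phi^M >= 0 on all of M^n.\<close>
definition types :: "('f, 'r) lang \<Rightarrow> ('a, 'f, 'r) struct \<Rightarrow> nat \<Rightarrow> 'a set
                      \<Rightarrow> (('a, 'f, 'r) fm \<Rightarrow> real) set" where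
  "types L M n A = {p.
     (\<forall>\<phi>. \<phi> \<notin> fms L n A \<longrightarrow> p \<phi> = 0) \<and>
     p FOne = 1 \<and>
     (\<forall>\<phi>\<in>fms L n A. \<forall>\<psi>\<in>fms L n A. p (Plus \<phi> \<psi>) = p \<phi> + p \<psi>) \<and>
     (\<forall>\<phi>\<in>fms L n A. \<forall>c. p (Scale c \<phi>) = c * p \<phi>) \<and>
     (\<forall>\<phi>\<in>fms L n A. (\<forall>xs\<in>tuples M n. 0 \<le> eval_at M \<phi> xs) \<longrightarrow> 0 \<le> p \<phi>)}"

definition extreme_type :: "('f, 'r) lang \<Rightarrow> ('a, 'f, 'r) struct \<Rightarrow> nat \<Rightarrow> 'a set
                      \<Rightarrow> (('a, 'f, 'r) fm \<Rightarrow> real) \<Rightarrow> bool" where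
  "extreme_type L M n A p \<longleftrightarrow> p \<in> types L M n A \<and>
     (\<forall>q1\<in>types L M n A. \<forall>q2\<in>types L M n A. \<forall>t::real. 0 < t \<and> t < 1 \<and>
        p = (\<lambda>\<phi>. t * q1 \<phi> + (1 - t) * q2 \<phi>) \<longrightarrow> q1 = q2)"

definition realizes :: "('f, 'r) lang \<Rightarrow> ('a, 'f, 'r) struct \<Rightarrow> nat \<Rightarrow> 'a set
                      \<Rightarrow> 'a list \<Rightarrow> (('a, 'f, 'r) fm \<Rightarrow> real) \<Rightarrow> bool" where
  "realizes L M n A xs p \<longleftrightarrow> xs \<in> tuples M n \<and> (\<forall>\<phi>\<in>fms L n A. p \<phi> = eval_at M \<phi> xs)"

definition extremally_aleph0_saturated :: "('f, 'r) lang \<Rightarrow> ('a, 'f, 'r) struct \<Rightarrow> bool" where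
  "extremally_aleph0_saturated L M \<longleftrightarrow>
     (\<forall>A n p. finite A \<and> A \<subseteq> carrier M \<and> extreme_type L M n A p \<longrightarrow>
        (\<exists>xs. realizes L M n A xs p))"

definition definable :: "('f, 'r) lang \<Rightarrow> ('a, 'f, 'r) struct \<Rightarrow> nat
                           \<Rightarrow> ('a list \<Rightarrow> real) \<Rightarrow> bool" where
  "definable L M n P \<longleftrightarrow>
     (\<exists>\<phi>::nat \<Rightarrow> ('a, 'f, 'r) fm. (\<forall>k. \<phi> k \<in> fms L n {}) \<and>
        (\<forall>e>0. \<exists>K. \<forall>k\<ge>K. \<forall>xs\<in>tuples M n. \<bar>eval_at M (\<phi> k) xs - P xs\<bar> \<le> e))"

definition zero_set :: "('a, 'f, 'r) struct \<Rightarrow> nat \<Rightarrow> ('a list \<Rightarrow> real) \<Rightarrow> 'a list set" where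
  "zero_set M n P = {xs\<in>tuples M n. P xs = 0}"

end

theory Submission
  imports Defs
begin

text \<open>
  The types over the empty set form a compact convex set \<open>S\<close> in the product space of real
  functions on formulas, and a definable predicate \<open>P\<close> extends to a continuous affine function
  \<open>P'\<close> on \<open>S\<close>: the uniform limit of evaluation at approximating formulas.
  If for some \<open>\<epsilon>\<close> no \<open>\<lambda>\<close> works, the closed sets \<open>{p. \<epsilon> \<le> Q' p - k P' p}\<close>
  are nonempty and decreasing, so compactness gives a type \<open>p\<^sub>0\<close> with \<open>P' p\<^sub>0 = 0\<close> and
  \<open>Q' p\<^sub>0 \<ge> \<epsilon>\<close>. The minimizers of \<open>P'\<close> form a face of \<open>S\<close> containing \<open>p\<^sub>0\<close>; the maximizers
  of \<open>Q'\<close> on it form a compact face, which by Zorn's lemma contains an extreme point of \<open>S\<close>.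
  Extremal saturation realizes that extreme type by a tuple in \<open>Z(P)\<close> where \<open>Q \<ge> \<epsilon>\<close>.
\<close>

section \<open>Compact convex sets of real functions\<close>

lemma compact_imp_closed_fun:
  fixes S :: "('i \<Rightarrow> real) set"
  assumes "compact S"
  shows "closed S"
proof -
  have "Hausdorff_space (euclidean :: ('i \<Rightarrow> real) topology)"
    using Hausdorff_space_product_topology[of "\<lambda>i. euclidean :: real topology" UNIV]
    by (simp only: euclidean_product_topology) simp
  moreover have "compactin euclidean S"
    using assms by simp
  ultimately show ?thesis
    using closed_closedin compactin_imp_closedin by blast
qed

lemma compact_fun_box: "compact {p :: 'i \<Rightarrow> real. \<forall>i. \<bar>p i\<bar> \<le> B i}"
proof -
  have "{p :: 'i \<Rightarrow> real. \<forall>i. \<bar>p i\<bar> \<le> B i} = PiE UNIV (\<lambda>i. {-B i..B i})"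
    by (force simp: PiE_def Pi_def abs_le_iff minus_le_iff)
  moreover have "compactin (product_topology (\<lambda>i. euclidean) UNIV) (PiE UNIV (\<lambda>i. {-B i..B i}))"
    by (subst compactin_PiE) auto
  ultimately show ?thesis
    by (simp add: euclidean_product_topology)
qed

definition mix :: "real \<Rightarrow> ('i \<Rightarrow> real) \<Rightarrow> ('i \<Rightarrow> real) \<Rightarrow> 'i \<Rightarrow> real" where
  "mix t p q = (\<lambda>i. t * p i + (1 - t) * q i)"

definition face :: "('i \<Rightarrow> real) set \<Rightarrow> ('i \<Rightarrow> real) set \<Rightarrow> bool" where
  "face K F \<longleftrightarrow> F \<subseteq> K \<and>
     (\<forall>p\<in>K. \<forall>q\<in>K. \<forall>t. 0 < t \<and> t < 1 \<and> mix t p q \<in> F \<longrightarrow> p \<in> F \<and> q \<in> F)"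

definition extreme_point :: "('i \<Rightarrow> real) set \<Rightarrow> ('i \<Rightarrow> real) \<Rightarrow> bool" where
  "extreme_point K e \<longleftrightarrow> e \<in> K \<and>
     (\<forall>p\<in>K. \<forall>q\<in>K. \<forall>t. 0 < t \<and> t < 1 \<and> e = mix t p q \<longrightarrow> p = q)"

definition mix_affine_on :: "('i \<Rightarrow> real) set \<Rightarrow> (('i \<Rightarrow> real) \<Rightarrow> real) \<Rightarrow> bool" where
  "mix_affine_on K f \<longleftrightarrow> (\<forall>p\<in>K. \<forall>q\<in>K. \<forall>t. f (mix t p q) = t * f p + (1 - t) * f q)"

definition maximizers :: "'x set \<Rightarrow> ('x \<Rightarrow> real) \<Rightarrow> 'x set" where
  "maximizers F f = {p\<in>F. \<forall>q\<in>F. f q \<le> f p}"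

lemma face_trans: "face K F \<Longrightarrow> face F G \<Longrightarrow> face K G"
  unfolding face_def by blast

lemma face_singleton_imp_extreme_point:
  assumes "face K {e}"
  shows "extreme_point K e"
  using assms unfolding face_def extreme_point_def by (metis singletonD singletonI subsetD)

lemma mix_affine_on_subset: "mix_affine_on K f \<Longrightarrow> F \<subseteq> K \<Longrightarrow> mix_affine_on F f"
  unfolding mix_affine_on_def by blast

lemma convex_combination_eq_max:
  fixes a b c t :: real
  assumes "0 < t" "t < 1" "a \<le> c" "b \<le> c" "c = t * a + (1 - t) * b"
  shows "a = c \<and> b = c"
proof -
  have "0 \<le> t * (c - a)" "0 \<le> (1 - t) * (c - b)"
    using assms by simp_all
  moreover have "t * (c - a) + (1 - t) * (c - b) = 0"
    using assms(5) by (simp add: algebra_simps)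
  ultimately have "t * (c - a) = 0" "(1 - t) * (c - b) = 0"
    by linarith+
  then show ?thesis
    using assms(1,2) by simp
qed

lemma face_maximizers:
  assumes "mix_affine_on F f"
  shows "face F (maximizers F f)"
  unfolding face_def maximizers_def
proof (intro conjI ballI allI impI)
  fix p q t assume pq: "p \<in> F" "q \<in> F" and t: "0 < t \<and> t < 1 \<and> mix t p q \<in> {p\<in>F. \<forall>q\<in>F. f q \<le> f p}"
  then have "f p = f (mix t p q) \<and> f q = f (mix t p q)"
    using assms by (intro convex_combination_eq_max) (auto simp: mix_affine_on_def)
  then show "p \<in> {p\<in>F. \<forall>q\<in>F. f q \<le> f p}" "q \<in> {p\<in>F. \<forall>q\<in>F. f q \<le> f p}"
    using pq t by auto
qed auto

lemma compact_maximizers: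
  fixes F :: "('i \<Rightarrow> real) set"
  assumes "compact F" "continuous_on F f"
  shows "compact (maximizers F f)" "F \<noteq> {} \<Longrightarrow> maximizers F f \<noteq> {}"
proof -
  show "F \<noteq> {} \<Longrightarrow> maximizers F f \<noteq> {}"
    using continuous_attains_sup[of F f] assms by (auto simp: maximizers_def)
  have "closed (F \<inter> f -` {f q..})" for q
    using assms by (intro continuous_closed_preimage compact_imp_closed_fun) auto
  then have "compact (F \<inter> (\<Inter>q\<in>F. F \<inter> f -` {f q..}))"
    using assms(1) by (intro compact_Int_closed closed_INT) auto
  moreover have "F \<inter> (\<Inter>q\<in>F. F \<inter> f -` {f q..}) = maximizers F f"
    by (auto simp: maximizers_def)
  ultimately show "compact (maximizers F f)"
    by simp
qed

lemma face_Inter: "C \<noteq> {} \<Longrightarrow> (\<And>G. G \<in> C \<Longrightarrow> face K G) \<Longrightarrow> face K (\<Inter>C)"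
  unfolding face_def by blast

lemma compact_chain_Inter:
  fixes C :: "('i \<Rightarrow> real) set set"
  assumes "C \<noteq> {}" and sets: "\<And>G. G \<in> C \<Longrightarrow> compact G \<and> G \<noteq> {}"
    and chain: "\<And>G H. G \<in> C \<Longrightarrow> H \<in> C \<Longrightarrow> G \<subseteq> H \<or> H \<subseteq> G"
  shows "compact (\<Inter>C) \<and> \<Inter>C \<noteq> {}"
proof
  obtain G0 where G0: "G0 \<in> C"
    using assms(1) by blast
  have closed: "closed G" if "G \<in> C" for G
    using sets[OF that] compact_imp_closed_fun by blast
  have "closed (\<Inter>C)"
    using closed by (rule closed_Inter[rule_format])
  then have "compact (G0 \<inter> \<Inter>C)"
    using sets[OF G0] compact_Int_closed by blast
  moreover have "G0 \<inter> \<Inter>C = \<Inter>C"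
    using G0 by blast
  ultimately show "compact (\<Inter>C)"
    by simp
  have "G0 \<inter> \<Inter>C \<noteq> {}"
  proof (rule compact_imp_fip)
    show "compact G0"
      using sets[OF G0] by blast
    show "closed G" if "G \<in> C" for G
      using closed that .
    fix D assume D: "finite D" "D \<subseteq> C"
    then have GD: "insert G0 D \<subseteq> C"
      using G0 by simp
    then have "subset.chain UNIV (insert G0 D)"
      unfolding subset_chain_def using chain by blast
    then have "\<Inter>(insert G0 D) \<in> insert G0 D"
      by (rule Inter_in_chain[rotated 2]) (simp_all add: D(1))
    then have "\<Inter>(insert G0 D) \<in> C"
      using GD by blast
    then show "G0 \<inter> \<Inter>D \<noteq> {}"
      using sets[of "\<Inter>(insert G0 D)"] by simp
  qed
  then show "\<Inter>C \<noteq> {}"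
    by blast
qed

lemma minimal_face_singleton:
  fixes G :: "('i \<Rightarrow> real) set"
  assumes face: "face K G" and compact: "compact G" and pq: "p \<in> G" "q \<in> G"
    and minimal: "\<And>H. face K H \<Longrightarrow> compact H \<Longrightarrow> H \<noteq> {} \<Longrightarrow> H \<subseteq> G \<Longrightarrow> H = G"
  shows "p = q"
proof
  fix i
  let ?H = "maximizers G (\<lambda>r. r i)"
  have cont: "continuous_on G (\<lambda>r. r i)"
    by (rule continuous_on_subset[OF continuous_on_product_coordinates]) simp
  have "mix_affine_on G (\<lambda>r. r i)"
    by (simp add: mix_affine_on_def mix_def)
  then have "face K ?H"
    using face face_maximizers face_trans by blast
  moreover have "compact ?H" "?H \<noteq> {}"
    using compact_maximizers[OF compact cont] pq by auto
  moreover have "?H \<subseteq> G"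
    by (auto simp: maximizers_def)
  ultimately have "?H = G"
    by (rule minimal)
  then have "q i \<le> p i" "p i \<le> q i"
    using pq unfolding maximizers_def by blast+
  then show "p i = q i"
    by simp
qed

lemma minimal_compact_face_exists:
  fixes F :: "('i \<Rightarrow> real) set"
  assumes "face K F" "compact F" "F \<noteq> {}"
  obtains G where "face K G" "compact G" "G \<noteq> {}" "G \<subseteq> F"
    and "\<And>H. face K H \<Longrightarrow> compact H \<Longrightarrow> H \<noteq> {} \<Longrightarrow> H \<subseteq> G \<Longrightarrow> H = G"
proof -
  define A where "A = {G. face K G \<and> compact G \<and> G \<noteq> {} \<and> G \<subseteq> F}"
  have "partial_order_on A (relation_of (\<lambda>G H. H \<subseteq> G) A)"
    unfolding partial_order_on_def preorder_on_def refl_on_def trans_on_def antisym_on_def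
      relation_of_def by blast
  then have "\<exists>G\<in>A. \<forall>H\<in>A. H \<subseteq> G \<longrightarrow> H = G"
  proof (rule predicate_Zorn)
    fix C assume "C \<in> Chains (relation_of (\<lambda>G H. H \<subseteq> G) A)"
    then have CA: "C \<subseteq> A" and chain: "\<And>G H. G \<in> C \<Longrightarrow> H \<in> C \<Longrightarrow> G \<subseteq> H \<or> H \<subseteq> G"
      by (auto simp: Chains_def relation_of_def)
    show "\<exists>G\<in>A. \<forall>H\<in>C. G \<subseteq> H"
    proof (cases "C = {}")
      case True
      have "F \<in> A"
        using assms by (simp add: A_def)
      then show ?thesis
        using True by blast
    next
      case False
      have "compact (\<Inter>C) \<and> \<Inter>C \<noteq> {}"
        using CA by (intro compact_chain_Inter[OF False _ chain]) (auto simp: A_def)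
      moreover have "face K (\<Inter>C)"
        using CA by (intro face_Inter[OF False]) (auto simp: A_def)
      moreover have "\<Inter>C \<subseteq> F"
        using CA False by (auto simp: A_def)
      ultimately show ?thesis
        unfolding A_def by blast
    qed
  qed
  then obtain G where "G \<in> A" and minimal: "\<And>H. H \<in> A \<Longrightarrow> H \<subseteq> G \<Longrightarrow> H = G"
    by blast
  then have G: "face K G" "compact G" "G \<noteq> {}" "G \<subseteq> F"
    by (simp_all add: A_def)
  show ?thesis
  proof (rule that[OF G])
    fix H assume "face K H" "compact H" "H \<noteq> {}" "H \<subseteq> G"
    then show "H = G"
      using G(4) by (intro minimal) (auto simp: A_def)
  qed
qed

lemma face_contains_extreme_point:
  fixes F :: "('i \<Rightarrow> real) set"
  assumes "face K F" "compact F" "F \<noteq> {}"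
  obtains e where "e \<in> F" "extreme_point K e"
proof -
  obtain G where G: "face K G" "compact G" "G \<noteq> {}" "G \<subseteq> F"
    and minimal: "\<And>H. face K H \<Longrightarrow> compact H \<Longrightarrow> H \<noteq> {} \<Longrightarrow> H \<subseteq> G \<Longrightarrow> H = G"
    using minimal_compact_face_exists[OF assms] by blast
  obtain e where e: "e \<in> G"
    using G(3) by blast
  have "p = e" if "p \<in> G" for p
    using minimal_face_singleton[OF G(1,2) that e minimal] .
  then have "G = {e}"
    using e by blast
  then have "extreme_point K e"
    using G(1) by (simp add: face_singleton_imp_extreme_point)
  then show ?thesis
    using that e G(4) by blast
qed

lemma extreme_point_lex_maximizer:
  fixes K :: "('i \<Rightarrow> real) set"
  assumes "compact K" "K \<noteq> {}" "continuous_on K f" "continuous_on K g"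
    and "mix_affine_on K f" "mix_affine_on K g"
  obtains e where "extreme_point K e" "e \<in> maximizers (maximizers K f) g"
proof -
  let ?G = "maximizers K f"
  have G: "face K ?G" "compact ?G" "?G \<noteq> {}"
    using face_maximizers[OF assms(5)] compact_maximizers[OF assms(1,3)] assms(2) by auto
  have "?G \<subseteq> K"
    by (auto simp: maximizers_def)
  then have "continuous_on ?G g" "mix_affine_on ?G g"
    using assms(4,6) by (auto intro: continuous_on_subset mix_affine_on_subset)
  then have "face K (maximizers ?G g)" "compact (maximizers ?G g)" "maximizers ?G g \<noteq> {}"
    using face_trans[OF G(1) face_maximizers] compact_maximizers[OF G(2)] G(3) by auto
  then show ?thesis
    using that face_contains_extreme_point by blast
qed

lemma compact_Inter_decseq_nonempty:
  fixes D :: "nat \<Rightarrow> 'a::topological_space set"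
  assumes "compact K" "\<And>k. closed (D k)" "decseq D" "\<And>k. K \<inter> D k \<noteq> {}"
  shows "K \<inter> (\<Inter>k. D k) \<noteq> {}"
proof (rule compact_imp_fip[OF assms(1)])
  show "closed T" if "T \<in> range D" for T
    using that assms(2) by blast
  fix F assume "finite F" "F \<subseteq> range D"
  then obtain I where I: "finite I" "F = D ` I"
    by (meson finite_subset_image)
  define N where "N = Max (insert 0 I)"
  have "D N \<subseteq> D i" if "i \<in> I" for i
    using decseqD[OF assms(3)] that I(1) by (simp add: N_def)
  then have "K \<inter> D N \<subseteq> K \<inter> \<Inter>F"
    using I(2) by blast
  then show "K \<inter> \<Inter>F \<noteq> {}"
    using assms(4)[of N] by blast
qed

lemma compact_penalty_zero:
  fixes K :: "('i \<Rightarrow> real) set"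
  assumes "compact K" "continuous_on K f" "continuous_on K g" and f_nonneg: "\<forall>p\<in>K. 0 \<le> f p"
    and penalized: "\<And>k::nat. \<exists>p\<in>K. \<epsilon> \<le> g p - real k * f p"
  obtains p where "p \<in> K" "f p = 0" "\<epsilon> \<le> g p"
proof -
  define D where "D k = K \<inter> (\<lambda>p. g p - real k * f p) -` {\<epsilon>..}" for k :: nat
  have "closed (D k)" for k
    unfolding D_def using assms(2,3) compact_imp_closed_fun[OF assms(1)]
    by (intro continuous_closed_preimage continuous_intros) auto
  moreover have "decseq D"
  proof (rule decseq_SucI)
    fix k
    have "real k * f p \<le> real (Suc k) * f p" if "p \<in> K" for p
      using f_nonneg that by (simp add: mult_right_mono)
    then show "D (Suc k) \<subseteq> D k"
      by (force simp: D_def)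
  qed
  moreover have "K \<inter> D k \<noteq> {}" for k
    using penalized[of k] by (auto simp: D_def)
  ultimately have "K \<inter> (\<Inter>k. D k) \<noteq> {}"
    by (rule compact_Inter_decseq_nonempty[OF assms(1)])
  then obtain p where p: "p \<in> K" "\<And>k. \<epsilon> \<le> g p - real k * f p"
    by (auto simp: D_def)
  have "f p = 0"
  proof (rule ccontr)
    assume "f p \<noteq> 0"
    then have "0 < f p"
      using f_nonneg p(1) by (simp add: order_less_le)
    moreover obtain k :: nat where "(g p - \<epsilon>) / f p < real k"
      using reals_Archimedean2 by blast
    ultimately show False
      using p(2)[of k] by (simp add: divide_less_eq)
  qed
  moreover have "\<epsilon> \<le> g p"
    using p(2)[of 0] by simp
  ultimately show ?thesis
    using that p(1) by blast
qed

section \<open>The type space\<close>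

lemma structure_carrier_nonempty: "is_structure L M \<Longrightarrow> carrier M \<noteq> {}"
  unfolding is_structure_def by blast

lemma structure_fun_in_carrier:
  "is_structure L M \<Longrightarrow> xs \<in> tuples M (farity L f) \<Longrightarrow> fun_int M f xs \<in> carrier M"
  unfolding is_structure_def by blast

lemma structure_rel_bounded:
  "is_structure L M \<Longrightarrow> xs \<in> tuples M (rarity L r) \<Longrightarrow> 0 \<le> rel_int M r xs \<and> rel_int M r xs \<le> 1"
  unfolding is_structure_def by blast

lemma structure_dist_bounded:
  "is_structure L M \<Longrightarrow> x \<in> carrier M \<Longrightarrow> y \<in> carrier M \<Longrightarrow> 0 \<le> mdist M x y \<and> mdist M x y \<le> 1"
  unfolding is_structure_def by blast

lemma eval_trm_in_carrier:
  assumes S: "is_structure L M" and \<rho>: "\<forall>i. \<rho> i \<in> carrier M"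
  shows "wf_trm L t \<Longrightarrow> params_trm t \<subseteq> carrier M \<Longrightarrow> eval_trm M \<rho> t \<in> carrier M"
proof (induction t)
  case (Fn f ts)
  then have "map (eval_trm M \<rho>) ts \<in> tuples M (farity L f)"
    by (auto simp: tuples_def)
  then show ?case
    using structure_fun_in_carrier[OF S] by simp
qed (use \<rho> in auto)

fun fm_bound :: "('a, 'f, 'r) fm \<Rightarrow> real" where
  "fm_bound FOne = 1"
| "fm_bound (Atom r ts) = 1"
| "fm_bound (Dist t u) = 1"
| "fm_bound (Scale c \<phi>) = \<bar>c\<bar> * fm_bound \<phi>"
| "fm_bound (Plus \<phi> \<psi>) = fm_bound \<phi> + fm_bound \<psi>"
| "fm_bound (FInf x \<phi>) = fm_bound \<phi>"
| "fm_bound (FSup x \<phi>) = fm_bound \<phi>"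

lemma fm_bound_nonneg: "0 \<le> fm_bound \<phi>"
  by (induction \<phi>) auto

lemma abs_INF_SUP_le:
  fixes f :: "'x \<Rightarrow> real"
  assumes "S \<noteq> {}" and bound: "\<And>a. a \<in> S \<Longrightarrow> \<bar>f a\<bar> \<le> B"
  shows "\<bar>INF a\<in>S. f a\<bar> \<le> B" and "\<bar>SUP a\<in>S. f a\<bar> \<le> B"
proof -
  obtain a0 where a0: "a0 \<in> S"
    using assms(1) by blast
  have lo: "- B \<le> f a" and hi: "f a \<le> B" if "a \<in> S" for a
    using bound[OF that] by (simp_all add: abs_le_iff)
  have "bdd_below (f ` S)"
    using lo by (rule bdd_belowI2)
  have "bdd_above (f ` S)"
    using hi by (rule bdd_aboveI2)
  then have "(INF a\<in>S. f a) \<le> f a0" "f a0 \<le> (SUP a\<in>S. f a)"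
    using \<open>bdd_below (f ` S)\<close> a0 by (simp_all add: cINF_lower cSUP_upper)
  moreover have "- B \<le> (INF a\<in>S. f a)" "(SUP a\<in>S. f a) \<le> B"
    using assms(1) lo hi by (simp_all add: cINF_greatest cSUP_least)
  ultimately show "\<bar>INF a\<in>S. f a\<bar> \<le> B" "\<bar>SUP a\<in>S. f a\<bar> \<le> B"
    using lo[OF a0] hi[OF a0] by (simp_all add: abs_le_iff)
qed

lemma abs_eval_fm_le:
  assumes S: "is_structure L M"
  shows "wf_fm L \<phi> \<Longrightarrow> params_fm \<phi> \<subseteq> carrier M \<Longrightarrow> \<forall>i. \<rho> i \<in> carrier M \<Longrightarrow>
    \<bar>eval_fm M \<rho> \<phi>\<bar> \<le> fm_bound \<phi>"
proof (induction \<phi> arbitrary: \<rho>)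
  case (Atom r ts)
  then have "eval_trm M \<rho> t \<in> carrier M" if "t \<in> set ts" for t
    using that by (intro eval_trm_in_carrier[OF S]) auto
  then have "map (eval_trm M \<rho>) ts \<in> tuples M (rarity L r)"
    using Atom.prems by (auto simp: tuples_def)
  then show ?case
    using structure_rel_bounded[OF S] by fastforce
next
  case (Dist t u)
  then have "eval_trm M \<rho> t \<in> carrier M" "eval_trm M \<rho> u \<in> carrier M"
    using eval_trm_in_carrier[OF S] by auto
  then show ?case
    using structure_dist_bounded[OF S] by fastforce
next
  case (Scale c \<phi>)
  then show ?case
    by (simp add: abs_mult mult_left_mono)
next
  case (Plus \<phi> \<psi>)
  then show ?case
    by (simp add: abs_triangle_ineq[THEN order_trans] add_mono)
next
  case (FInf x \<phi>)
  then show ?case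
    using abs_INF_SUP_le(1)[OF structure_carrier_nonempty[OF S]] by simp
next
  case (FSup x \<phi>)
  then show ?case
    using abs_INF_SUP_le(2)[OF structure_carrier_nonempty[OF S]] by simp
qed simp

lemma tuple_val_in_carrier:
  assumes "is_structure L M" "xs \<in> tuples M n"
  shows "tuple_val M xs i \<in> carrier M"
proof (cases "i < length xs")
  case True
  then show ?thesis
    using assms(2) by (auto simp: tuple_val_def tuples_def)
next
  case False
  then show ?thesis
    using structure_carrier_nonempty[OF assms(1)] by (simp add: tuple_val_def some_in_eq)
qed

lemma fms_FOne [simp]: "FOne \<in> fms L n A"
  by (simp add: fms_def)

lemma fms_Plus [simp]: "Plus \<phi> \<psi> \<in> fms L n A \<longleftrightarrow> \<phi> \<in> fms L n A \<and> \<psi> \<in> fms L n A"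
  by (auto simp: fms_def)

lemma fms_Scale [simp]: "Scale c \<phi> \<in> fms L n A \<longleftrightarrow> \<phi> \<in> fms L n A"
  by (auto simp: fms_def)

lemma eval_at_simps [simp]:
  "eval_at M FOne xs = 1"
  "eval_at M (Plus \<phi> \<psi>) xs = eval_at M \<phi> xs + eval_at M \<psi> xs"
  "eval_at M (Scale c \<phi>) xs = c * eval_at M \<phi> xs"
  by (simp_all add: eval_at_def)

lemma abs_eval_at_le:
  assumes "is_structure L M" "xs \<in> tuples M n" "\<phi> \<in> fms L n A" "A \<subseteq> carrier M"
  shows "\<bar>eval_at M \<phi> xs\<bar> \<le> fm_bound \<phi>"
  unfolding eval_at_def
  using assms tuple_val_in_carrier[OF assms(1,2)] by (intro abs_eval_fm_le) (auto simp: fms_def)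

lemma type_le_add:
  assumes p: "p \<in> types L M n A" and \<alpha>: "\<alpha> \<in> fms L n A" and \<beta>: "\<beta> \<in> fms L n A"
    and le: "\<forall>xs\<in>tuples M n. eval_at M \<alpha> xs \<le> eval_at M \<beta> xs + e"
  shows "p \<alpha> \<le> p \<beta> + e"
proof -
  let ?\<gamma> = "Plus (Scale e FOne) (Plus \<beta> (Scale (-1) \<alpha>))"
  have "?\<gamma> \<in> fms L n A"
    using \<alpha> \<beta> by simp
  moreover have "\<forall>xs\<in>tuples M n. 0 \<le> eval_at M ?\<gamma> xs"
    using le by auto
  ultimately have "0 \<le> p ?\<gamma>"
    using p unfolding types_def by blast
  moreover have "p ?\<gamma> = e + p \<beta> - p \<alpha>"
    using p \<alpha> \<beta> unfolding types_def by simp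
  ultimately show ?thesis
    by simp
qed

lemma type_const: "p \<in> types L M n A \<Longrightarrow> p (Scale c FOne) = c"
  unfolding types_def by simp

lemma type_lower_bound:
  assumes "p \<in> types L M n A" "\<phi> \<in> fms L n A" "\<forall>xs\<in>tuples M n. c \<le> eval_at M \<phi> xs"
  shows "c \<le> p \<phi>"
  using type_le_add[OF assms(1) _ assms(2), of "Scale c FOne" 0] assms(3) type_const[OF assms(1)]
  by simp

lemma abs_type_diff_le:
  assumes "p \<in> types L M n A" "\<alpha> \<in> fms L n A" "\<beta> \<in> fms L n A"
    and "\<forall>xs\<in>tuples M n. \<bar>eval_at M \<alpha> xs - eval_at M \<beta> xs\<bar> \<le> e"
  shows "\<bar>p \<alpha> - p \<beta>\<bar> \<le> e"
proof -
  have "\<forall>xs\<in>tuples M n. eval_at M \<alpha> xs \<le> eval_at M \<beta> xs + e"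
    "\<forall>xs\<in>tuples M n. eval_at M \<beta> xs \<le> eval_at M \<alpha> xs + e"
    using assms(4) by (auto simp: abs_le_iff)
  then have "p \<alpha> \<le> p \<beta> + e" "p \<beta> \<le> p \<alpha> + e"
    by (simp_all add: type_le_add[OF assms(1,2,3)] type_le_add[OF assms(1,3,2)])
  then show ?thesis
    by (simp add: abs_le_iff)
qed

lemma abs_type_le:
  assumes "is_structure L M" "p \<in> types L M n A" "A \<subseteq> carrier M"
  shows "\<bar>p \<phi>\<bar> \<le> fm_bound \<phi>"
proof (cases "\<phi> \<in> fms L n A")
  case False
  then show ?thesis
    using assms(2) fm_bound_nonneg unfolding types_def by simp
next
  case True
  then have "\<bar>p \<phi> - p (Scale 0 FOne)\<bar> \<le> fm_bound \<phi>"
    using assms abs_eval_at_le by (intro abs_type_diff_le) auto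
  then show ?thesis
    using type_const[OF assms(2)] by simp
qed

lemma types_closed: "closed (types L M n A)"
proof -
  let ?F = "fms L n A"
  have eq: "types L M n A =
      (\<Inter>\<phi>\<in>-?F. {p. p \<phi> = 0}) \<inter> {p. p FOne = 1} \<inter>
      (\<Inter>\<phi>\<in>?F. \<Inter>\<psi>\<in>?F. {p. p (Plus \<phi> \<psi>) = p \<phi> + p \<psi>}) \<inter>
      (\<Inter>\<phi>\<in>?F. \<Inter>c. {p. p (Scale c \<phi>) = c * p \<phi>}) \<inter>
      (\<Inter>\<phi>\<in>{\<phi>\<in>?F. \<forall>xs\<in>tuples M n. 0 \<le> eval_at M \<phi> xs}. {p. 0 \<le> p \<phi>})"
    unfolding types_def by auto
  have coord: "continuous_on UNIV (\<lambda>p :: ('a, 'f, 'r) fm \<Rightarrow> real. p \<phi>)" for \<phi>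
    by simp
  show ?thesis
    unfolding eq
    by (intro closed_Int closed_INT ballI closed_Collect_eq closed_Collect_le continuous_on_add
        continuous_on_mult_left coord continuous_on_const)
qed

lemma types_compact:
  assumes "is_structure L M" "A \<subseteq> carrier M"
  shows "compact (types L M n A)"
proof -
  have "compact ({p. \<forall>\<phi>. \<bar>p \<phi>\<bar> \<le> fm_bound \<phi>} \<inter> types L M n A)"
    by (rule compact_Int_closed[OF compact_fun_box types_closed])
  also have "{p. \<forall>\<phi>. \<bar>p \<phi>\<bar> \<le> fm_bound \<phi>} \<inter> types L M n A = types L M n A"
    using abs_type_le[OF assms(1) _ assms(2)] by (intro Int_absorb1 subsetI CollectI allI)
  finally show ?thesis .
qed

definition realized_type :: "('f, 'r) lang \<Rightarrow> ('a, 'f, 'r) struct \<Rightarrow> nat \<Rightarrow> 'a list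
    \<Rightarrow> ('a, 'f, 'r) fm \<Rightarrow> real" where
  "realized_type L M n xs = (\<lambda>\<phi>. if \<phi> \<in> fms L n {} then eval_at M \<phi> xs else 0)"

lemma realized_type_in_types: "xs \<in> tuples M n \<Longrightarrow> realized_type L M n xs \<in> types L M n {}"
  unfolding types_def realized_type_def by auto

lemma realizes_realized_type: "xs \<in> tuples M n \<Longrightarrow> realizes L M n {} xs (realized_type L M n xs)"
  unfolding realizes_def realized_type_def by simp

section \<open>Definable predicates as affine functions on types\<close>

lemma uniformly_Cauchy_types:
  assumes \<phi>: "\<And>k. \<phi> k \<in> fms L n A"
    and approx: "\<And>e. e > 0 \<Longrightarrow> \<exists>K. \<forall>k\<ge>K. \<forall>xs\<in>tuples M n. \<bar>eval_at M (\<phi> k) xs - P xs\<bar> \<le> e"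
  shows "uniformly_Cauchy_on (types L M n A) (\<lambda>k p. p (\<phi> k))"
proof (rule uniformly_Cauchy_onI)
  fix e :: real assume "e > 0"
  then obtain K where K: "\<forall>k\<ge>K. \<forall>xs\<in>tuples M n. \<bar>eval_at M (\<phi> k) xs - P xs\<bar> \<le> e / 3"
    using approx[of "e / 3"] by auto
  have bound: "\<bar>p (\<phi> k) - p (\<phi> j)\<bar> \<le> 2 * e / 3" if "p \<in> types L M n A" "k \<ge> K" "j \<ge> K" for p k j
  proof (rule abs_type_diff_le[OF that(1) \<phi> \<phi>], intro ballI)
    fix xs assume "xs \<in> tuples M n"
    then have "\<bar>eval_at M (\<phi> k) xs - P xs\<bar> \<le> e / 3" "\<bar>eval_at M (\<phi> j) xs - P xs\<bar> \<le> e / 3"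
      using K that by auto
    then show "\<bar>eval_at M (\<phi> k) xs - eval_at M (\<phi> j) xs\<bar> \<le> 2 * e / 3"
      unfolding abs_le_iff by linarith
  qed
  have "dist (p (\<phi> k)) (p (\<phi> j)) < e" if "p \<in> types L M n A" "k \<ge> K" "j \<ge> K" for p k j
    using bound[OF that] \<open>e > 0\<close> unfolding dist_real_def by linarith
  then show "\<exists>K. \<forall>p\<in>types L M n A. \<forall>k\<ge>K. \<forall>j\<ge>K. dist (p (\<phi> k)) (p (\<phi> j)) < e"
    by blast
qed

lemma coordinates_tendsto_lim:
  fixes K :: "('i \<Rightarrow> real) set"
  assumes "uniformly_Cauchy_on K (\<lambda>k p. p (\<phi> k))" "p \<in> K"
  shows "(\<lambda>k. p (\<phi> k)) \<longlonglongrightarrow> lim (\<lambda>k. p (\<phi> k))"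
  using uniformly_Cauchy_imp_Cauchy[OF assms]
  by (simp add: Cauchy_convergent_iff convergent_LIMSEQ_iff)

lemma continuous_on_coordinates_lim:
  fixes K :: "('i \<Rightarrow> real) set"
  assumes Cauchy: "uniformly_Cauchy_on K (\<lambda>k p. p (\<phi> k))"
  shows "continuous_on K (\<lambda>p. lim (\<lambda>k. p (\<phi> k)))"
proof -
  obtain l where l: "uniform_limit K (\<lambda>k p. p (\<phi> k)) l sequentially"
    using Cauchy_uniformly_convergent[OF Cauchy] unfolding uniformly_convergent_on_def by blast
  have "l p = lim (\<lambda>k. p (\<phi> k))" if "p \<in> K" for p
    using tendsto_uniform_limitI[OF l that] coordinates_tendsto_lim[OF Cauchy that]
    by (rule LIMSEQ_unique)
  then have "uniform_limit K (\<lambda>k p. p (\<phi> k)) (\<lambda>p. lim (\<lambda>k. p (\<phi> k))) sequentially"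
    using l by (subst uniform_limit_cong'[where g = "\<lambda>k p. p (\<phi> k)" and i = l]) simp_all
  then show ?thesis
    by (rule uniform_limit_theorem[OF _ _ sequentially_bot, rotated])
      (intro always_eventually allI continuous_on_subset[OF continuous_on_product_coordinates], simp)
qed

lemma mix_affine_on_coordinates_lim:
  fixes K :: "('i \<Rightarrow> real) set"
  assumes Cauchy: "uniformly_Cauchy_on K (\<lambda>k p. p (\<phi> k))"
  shows "mix_affine_on K (\<lambda>p. lim (\<lambda>k. p (\<phi> k)))"
  unfolding mix_affine_on_def
proof (intro ballI allI)
  fix p q t assume "p \<in> K" "q \<in> K"
  then have "(\<lambda>k. mix t p q (\<phi> k)) \<longlonglongrightarrow> t * lim (\<lambda>k. p (\<phi> k)) + (1 - t) * lim (\<lambda>k. q (\<phi> k))"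
    unfolding mix_def by (intro tendsto_intros coordinates_tendsto_lim[OF Cauchy])
  then show "lim (\<lambda>k. mix t p q (\<phi> k)) = t * lim (\<lambda>k. p (\<phi> k)) + (1 - t) * lim (\<lambda>k. q (\<phi> k))"
    by (rule limI)
qed

lemma realizes_tendsto:
  assumes \<phi>: "\<And>k. \<phi> k \<in> fms L n A" and "realizes L M n A xs p"
    and approx: "\<And>e. e > 0 \<Longrightarrow> \<exists>K. \<forall>k\<ge>K. \<forall>xs\<in>tuples M n. \<bar>eval_at M (\<phi> k) xs - P xs\<bar> \<le> e"
  shows "(\<lambda>k. p (\<phi> k)) \<longlonglongrightarrow> P xs"
proof (rule LIMSEQ_I)
  fix r :: real assume "r > 0"
  have xs: "xs \<in> tuples M n" and val: "\<And>k. p (\<phi> k) = eval_at M (\<phi> k) xs"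
    using assms(2) \<phi> by (auto simp: realizes_def)
  obtain K where K: "\<forall>k\<ge>K. \<bar>eval_at M (\<phi> k) xs - P xs\<bar> \<le> r / 2"
    using approx[of "r / 2"] xs \<open>r > 0\<close> by auto
  have "norm (p (\<phi> k) - P xs) < r" if "k \<ge> K" for k
    using K that \<open>r > 0\<close> by (auto simp: val)
  then show "\<exists>K. \<forall>k\<ge>K. norm (p (\<phi> k) - P xs) < r"
    by blast
qed

lemma type_limit_nonneg:
  assumes p: "p \<in> types L M n A" and \<phi>: "\<And>k. \<phi> k \<in> fms L n A"
    and approx: "\<And>e. e > 0 \<Longrightarrow> \<exists>K. \<forall>k\<ge>K. \<forall>xs\<in>tuples M n. \<bar>eval_at M (\<phi> k) xs - P xs\<bar> \<le> e"
    and P_nonneg: "\<forall>xs\<in>tuples M n. 0 \<le> P xs" and lim: "(\<lambda>k. p (\<phi> k)) \<longlonglongrightarrow> h"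
  shows "0 \<le> h"
proof (rule field_le_epsilon)
  fix e :: real assume "e > 0"
  then obtain K where K: "\<forall>k\<ge>K. \<forall>xs\<in>tuples M n. \<bar>eval_at M (\<phi> k) xs - P xs\<bar> \<le> e"
    using approx by blast
  have "- e \<le> p (\<phi> k)" if "k \<ge> K" for k
    using K P_nonneg that by (intro type_lower_bound[OF p \<phi>]) (force simp: abs_le_iff)
  then have "- e \<le> h"
    using LIMSEQ_le_const[OF lim] by blast
  then show "0 \<le> h + e"
    by simp
qed

lemma definable_extends_to_types:
  fixes L :: "('f, 'r) lang" and M :: "('a, 'f, 'r) struct" and P :: "'a list \<Rightarrow> real"
  assumes "definable L M n P"
  obtains H where "continuous_on (types L M n {}) H" "mix_affine_on (types L M n {}) H"
    and "\<And>p xs. p \<in> types L M n {} \<Longrightarrow> realizes L M n {} xs p \<Longrightarrow> H p = P xs"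
    and "(\<forall>xs\<in>tuples M n. 0 \<le> P xs) \<Longrightarrow> \<forall>p\<in>types L M n {}. 0 \<le> H p"
proof -
  obtain \<phi> :: "nat \<Rightarrow> ('a, 'f, 'r) fm" where \<phi>: "\<And>k. \<phi> k \<in> fms L n {}"
    and approx: "\<And>e. e > 0 \<Longrightarrow> \<exists>K. \<forall>k\<ge>K. \<forall>xs\<in>tuples M n. \<bar>eval_at M (\<phi> k) xs - P xs\<bar> \<le> e"
    using assms unfolding definable_def by blast
  have Cauchy: "uniformly_Cauchy_on (types L M n {}) (\<lambda>k p. p (\<phi> k))"
    using \<phi> approx by (rule uniformly_Cauchy_types)
  note conv = coordinates_tendsto_lim[OF Cauchy]
  show ?thesis
  proof (rule that)
    show "continuous_on (types L M n {}) (\<lambda>p. lim (\<lambda>k. p (\<phi> k)))"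
      using Cauchy by (rule continuous_on_coordinates_lim)
    show "mix_affine_on (types L M n {}) (\<lambda>p. lim (\<lambda>k. p (\<phi> k)))"
      using Cauchy by (rule mix_affine_on_coordinates_lim)
    show "lim (\<lambda>k. p (\<phi> k)) = P xs" if "p \<in> types L M n {}" "realizes L M n {} xs p" for p xs
      using conv[OF that(1)] realizes_tendsto[OF \<phi> that(2) approx] by (rule LIMSEQ_unique)
    show "\<forall>p\<in>types L M n {}. 0 \<le> lim (\<lambda>k. p (\<phi> k))" if "\<forall>xs\<in>tuples M n. 0 \<le> P xs"
    proof
      fix p assume p: "p \<in> types L M n {}"
      show "0 \<le> lim (\<lambda>k. p (\<phi> k))"
        using p \<phi> approx that conv[OF p] by (rule type_limit_nonneg)
    qed
  qed
qed

section \<open>Zero sets of definable predicates\<close>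

lemma mix_affine_on_uminus: "mix_affine_on K f \<Longrightarrow> mix_affine_on K (\<lambda>p. - f p)"
  unfolding mix_affine_on_def by (simp add: algebra_simps)

lemma extreme_point_types_realized:
  assumes "extremally_aleph0_saturated L M" "extreme_point (types L M n {}) e"
  obtains xs where "realizes L M n {} xs e"
proof -
  have "extreme_type L M n {} e"
    using assms(2) unfolding extreme_type_def extreme_point_def mix_def by blast
  then show ?thesis
    using assms(1) that unfolding extremally_aleph0_saturated_def by blast
qed

lemma approx_imp_zero_set_subset:
  assumes Q_nonneg: "\<forall>xs\<in>tuples M n. 0 \<le> Q xs"
    and approx: "\<forall>\<epsilon>>0. \<exists>lam::real\<ge>0. \<forall>xs\<in>tuples M n. Q xs \<le> lam * P xs + \<epsilon>"
  shows "zero_set M n P \<subseteq> zero_set M n Q"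
proof
  fix xs assume "xs \<in> zero_set M n P"
  then have xs: "xs \<in> tuples M n" "P xs = 0"
    by (auto simp: zero_set_def)
  have "Q xs \<le> 0 + \<epsilon>" if "\<epsilon> > 0" for \<epsilon>
    using approx that xs by fastforce
  then have "Q xs \<le> 0"
    by (rule field_le_epsilon)
  then show "xs \<in> zero_set M n Q"
    using Q_nonneg xs(1) by (simp add: zero_set_def order_antisym)
qed

lemma no_approx_imp_penalized_types:
  assumes HP: "\<And>p xs. p \<in> types L M n {} \<Longrightarrow> realizes L M n {} xs p \<Longrightarrow> HP p = P xs"
    and HQ: "\<And>p xs. p \<in> types L M n {} \<Longrightarrow> realizes L M n {} xs p \<Longrightarrow> HQ p = Q xs"
    and no_lam: "\<not> (\<exists>lam::real\<ge>0. \<forall>xs\<in>tuples M n. Q xs \<le> lam * P xs + \<epsilon>)"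
  shows "\<exists>p\<in>types L M n {}. \<epsilon> \<le> HQ p - real k * HP p"
proof -
  have "\<not> (\<forall>xs\<in>tuples M n. Q xs \<le> real k * P xs + \<epsilon>)"
    using no_lam by auto
  then obtain xs where xs: "xs \<in> tuples M n" "real k * P xs + \<epsilon> < Q xs"
    by (auto simp: not_le)
  let ?p = "realized_type L M n xs"
  have "?p \<in> types L M n {}" "realizes L M n {} xs ?p"
    using xs(1) by (rule realized_type_in_types, rule realizes_realized_type)
  moreover have "HP ?p = P xs" "HQ ?p = Q xs"
    using calculation by (simp_all add: HP HQ)
  ultimately show ?thesis
    using xs(2) by force
qed

lemma zero_set_subset_imp_approx:
  fixes L :: "('f, 'r) lang" and M :: "('a, 'f, 'r) struct" and P Q :: "'a list \<Rightarrow> real"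
  assumes S: "is_structure L M" and sat: "extremally_aleph0_saturated L M"
    and "definable L M n P" "definable L M n Q" and P_nonneg: "\<forall>xs\<in>tuples M n. 0 \<le> P xs"
    and Z: "zero_set M n P \<subseteq> zero_set M n Q" and "\<epsilon> > 0"
  shows "\<exists>lam::real\<ge>0. \<forall>xs\<in>tuples M n. Q xs \<le> lam * P xs + \<epsilon>"
proof (rule ccontr)
  assume no_lam: "\<not> ?thesis"
  let ?S = "types L M n {}"
  obtain HP where HP: "continuous_on ?S HP" "mix_affine_on ?S HP"
    and HP_realized: "\<And>p xs. p \<in> ?S \<Longrightarrow> realizes L M n {} xs p \<Longrightarrow> HP p = P xs"
    and HP_nonneg: "(\<forall>xs\<in>tuples M n. 0 \<le> P xs) \<Longrightarrow> \<forall>p\<in>?S. 0 \<le> HP p"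
    by (rule definable_extends_to_types[OF assms(3)]) blast
  obtain HQ where HQ: "continuous_on ?S HQ" "mix_affine_on ?S HQ"
    and HQ_realized: "\<And>p xs. p \<in> ?S \<Longrightarrow> realizes L M n {} xs p \<Longrightarrow> HQ p = Q xs"
    by (rule definable_extends_to_types[OF assms(4)]) blast
  have compact: "compact ?S"
    using types_compact[OF S] by simp
  obtain p0 where p0: "p0 \<in> ?S" "HP p0 = 0" "\<epsilon> \<le> HQ p0"
    by (rule compact_penalty_zero[OF compact HP(1) HQ(1) HP_nonneg[OF P_nonneg]
          no_approx_imp_penalized_types[OF HP_realized HQ_realized no_lam]])
  have "?S \<noteq> {}"
    using p0(1) by blast
  moreover have "continuous_on ?S (\<lambda>p. - HP p)" "mix_affine_on ?S (\<lambda>p. - HP p)"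
    using HP by (simp_all add: continuous_on_minus mix_affine_on_uminus)
  ultimately obtain e where "extreme_point ?S e"
    and e: "e \<in> maximizers (maximizers ?S (\<lambda>p. - HP p)) HQ"
    using extreme_point_lex_maximizer[OF compact _ _ HQ(1) _ HQ(2)] by blast
  then obtain xs where xs: "realizes L M n {} xs e"
    using sat extreme_point_types_realized by blast
  have e_S: "e \<in> ?S" and e_min: "\<forall>q\<in>?S. HP e \<le> HP q"
    using e by (auto simp: maximizers_def)
  have "HP e = 0"
    using e_min p0(1,2) HP_nonneg[OF P_nonneg] e_S by (metis order_antisym)
  then have "xs \<in> zero_set M n P"
    using HP_realized[OF e_S xs] xs by (simp add: zero_set_def realizes_def)
  then have "HQ e = 0"
    using Z HQ_realized[OF e_S xs] by (auto simp: zero_set_def)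
  moreover have "p0 \<in> maximizers ?S (\<lambda>p. - HP p)"
    using p0 HP_nonneg[OF P_nonneg] by (simp add: maximizers_def)
  then have "HQ p0 \<le> HQ e"
    using e by (simp add: maximizers_def)
  ultimately show False
    using p0(3) \<open>\<epsilon> > 0\<close> by linarith
qed

theorem mainTheorem17:
  fixes L :: "('f, 'r) lang" and M :: "('a, 'f, 'r) struct"
    and n :: nat and P Q :: "'a list \<Rightarrow> real"
  assumes "is_structure L M"
    and "extremally_aleph0_saturated L M"
    and "definable L M n P" and "definable L M n Q"
    and "\<forall>xs\<in>tuples M n. 0 \<le> P xs" and "\<forall>xs\<in>tuples M n. 0 \<le> Q xs"
  shows "zero_set M n P \<subseteq> zero_set M n Q \<longleftrightarrow>
         (\<forall>\<epsilon>>0. \<exists>lam::real\<ge>0. \<forall>xs\<in>tuples M n. Q xs \<le> lam * P xs + \<epsilon>)"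
  using zero_set_subset_imp_approx[OF assms(1-5)] approx_imp_zero_set_subset[OF assms(6)] by blast

end
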